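(* Let $m=n=1$, $\boldsymbol s\in\{(1,-1),(-1,1)\}$, $\tilde{\boldsymbol s}=(s_2,s_1)$, $\boldsymbol z$ $h$-generic, let $y$ be a polynomial representing a solution of the BAE associated to $\boldsymbol s,\boldsymbol\lambda,\boldsymbol z,l$ and $\tilde y$ the polynomial with $y\,\tilde y[-s_1]=\varphi^{\boldsymbol s}-\psi^{\boldsymbol s}$. Define \[\mathcal R^{\boldsymbol s}(y)=\Big(1-\frac{T_1^{\boldsymbol s}y[s_1]}{T_1^{\boldsymbol s}[s_1]y}\tau\Big)^{s_1}\Big(1-\frac{T_2^{\boldsymbol s}y[-s_2]}{T_2^{\boldsymbol s}[s_2]y}\tau\Big)^{s_2},\] and $\mathcal R^{\tilde{\boldsymbol s}}(\tilde y)$ by the same formula with $\boldsymbol s,y,T^{\boldsymbol s}$ replaced by $\tilde{\boldsymbol s},\tilde y,T^{\tilde{\boldsymbol s}}$. If $\boldsymbol\lambda$ is typical, then $\mathcal R^{\boldsymbol s}(y)$ is a $(1|1)$-rational difference operator and $\mathcal R^{\boldsymbol s}(y)=\mathcal R^{\tilde{\boldsymbol s}}(\tilde y)$.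
   Context: Fix $h\in\mathbb{C}^\times$. $\mathbb{K}=\mathbb{C}(x)$, $f[i](x)=f(x-ih)$; $\mathbb{K}[\tau]$ difference operators with $\tau f=f[1]\tau$; $\mathbb{K}(\tau)$ its division ring of fractions. A fractional factorization $\mathcal R=\mathcal D_{\bar0}\mathcal D_{\bar1}^{-1}$ ($\mathcal D_{\bar0},\mathcal D_{\bar1}\in\mathbb{K}[\tau]$) is minimal if $\mathcal D_{\bar1}$ is monic of minimal order; $\mathcal R$ is a $(1|1)$-rational difference operator if in its minimal fractional factorization $\mathcal D_{\bar0},\mathcal D_{\bar1}$ are completely factorable over $\mathbb{K}$ (products of the leading coefficient and factors $\tau-g$, $g\in\mathbb{K}$), both have order $1$, and they have the same nonzero constant term. Polynomial $\mathfrak{gl}_{1|1}$ weights $\lambda^{(k)}$, $k=1,\dots,p$; their weights with respect to $\boldsymbol s$ (eigenvalues of $e_{\sigma(1)\sigma(1)},e_{\sigma(2)\sigma(2)}$ on the $\boldsymbol s$-highest weight vector, $\sigma$ the identity for $\boldsymbol s=(1,-1)$ and the transposition otherwise) are $(a_k,b_k)\in\mathbb{Z}^2_{\ge0}$ with $b_k=0$ if $a_k=0$; $\boldsymbol\lambda$ typical iff $a_k+b_k\ne0$ for some $k$. $\tilde a_k=b_k+1$, $\tilde b_k=a_k-1$ if $a_k+b_k\ne0$, else $\tilde a_k=\tilde b_k=0$. $\boldsymbol z$ $h$-generic. $T_1^{\boldsymbol s}=\prod_k\prod_{j=1}^{a_k}(x-z_k+s_1jh)$, $T_2^{\boldsymbol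 s}=\prod_k\prod_{j=1}^{b_k}(x-z_k+s_2jh)$, $T_1^{\tilde{\boldsymbol s}}=\prod_k\prod_{j=1}^{\tilde a_k}(x-z_k+\tilde s_1jh)$, $T_2^{\tilde{\boldsymbol s}}=\prod_k\prod_{j=1}^{\tilde b_k}(x-z_k+\tilde s_2jh)$. $\varphi^{\boldsymbol s}=\prod_{k:a_k+b_k\ne0}(x-z_k+s_1a_kh)$, $\psi^{\boldsymbol s}=\prod_{k:a_k+b_k\ne0}(x-z_k+s_2b_kh)$. BAE: $\prod_{k:a_k+b_k\ne0}\frac{t_j-z_k+s_1a_kh}{t_j-z_k+s_2b_kh}=1$, $j=1,\dots,l$, a root of multiplicity $r$ appearing at most $r$ times among the $t_j$; $y=\prod_j(x-t_j)$ represents the solution. *)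

theory Defs
  imports "HOL-Computational_Algebra.Computational_Algebra" "HOL-Computational_Algebra.Field_as_Ring"
begin

type_synonym K = "complex poly fract"

definition sp :: "complex \<Rightarrow> int \<Rightarrow> complex poly \<Rightarrow> complex poly" where
  "sp h i p = p \<circ>\<^sub>p [:- (of_int i * h), 1:]"

definition shiftK :: "complex \<Rightarrow> int \<Rightarrow> K \<Rightarrow> K" where
  "shiftK h i r = (case quot_of_fract r of (a, b) \<Rightarrow> to_fract (sp h i a) / to_fract (sp h i b))"

section \<open>Difference operators K[tau], with tau f = f[1] tau\<close>

text \<open>A difference operator sum_i c_i tau^i is represented by the K-polynomial with
  coefficients c_i; its order is the degree, its constant term is coeff 0.\<close>
type_synonym dop = "K poly"

definition dmult :: "complex \<Rightarrow> dop \<Rightarrow> dop \<Rightarrow> dop" where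
  "dmult h P Q = (\<Sum>i\<le>degree P. \<Sum>j\<le>degree Q.
      monom (coeff P i * shiftK h (int i) (coeff Q j)) (i + j))"

fun dprod :: "complex \<Rightarrow> K list \<Rightarrow> dop" where
  "dprod h [] = 1"
| "dprod h (g # gs) = dmult h [:- g, 1:] (dprod h gs)"

definition compl_factorable :: "complex \<Rightarrow> dop \<Rightarrow> bool" where
  "compl_factorable h D \<longleftrightarrow> (\<exists>c gs. D = dmult h [:c:] (dprod h gs))"

text \<open>RF P Q stands for P Q^(-1), LF Q P stands for Q^(-1) P (Q nonzero).\<close>
datatype fexpr = RF dop dop | LF dop dop

text \<open>Equality in the (left and right Ore) division ring of fractions K(tau).\<close>
fun feq :: "complex \<Rightarrow> fexpr \<Rightarrow> fexpr \<Rightarrow> bool" where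
  "feq h (RF P Q) (RF P' Q') \<longleftrightarrow>
     (\<exists>U U'. U \<noteq> 0 \<and> U' \<noteq> 0 \<and> dmult h Q U = dmult h Q' U' \<and> dmult h P U = dmult h P' U')"
| "feq h (LF Q P) (LF Q' P') \<longleftrightarrow>
     (\<exists>U U'. U \<noteq> 0 \<and> U' \<noteq> 0 \<and> dmult h U Q = dmult h U' Q' \<and> dmult h U P = dmult h U' P')"
| "feq h (LF Q P) (RF P' Q') \<longleftrightarrow> dmult h P Q' = dmult h Q P'"
| "feq h (RF P' Q') (LF Q P) \<longleftrightarrow> dmult h P Q' = dmult h Q P'"

text \<open>(1|1)-rational difference operator: in the minimal fractional factorization
  R = D0 D1^(-1) (D1 monic of minimal order), D0 and D1 are completely factorable,
  both of order 1, with the same nonzero constant term.\<close>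
definition minimal_ff :: "complex \<Rightarrow> fexpr \<Rightarrow> dop \<Rightarrow> dop \<Rightarrow> bool" where
  "minimal_ff h R D0 D1 \<longleftrightarrow> D1 \<noteq> 0 \<and> lead_coeff D1 = 1 \<and> feq h R (RF D0 D1) \<and>
     (\<forall>D0' D1'. D1' \<noteq> 0 \<longrightarrow> feq h R (RF D0' D1') \<longrightarrow> degree D1 \<le> degree D1')"

definition rational11 :: "complex \<Rightarrow> fexpr \<Rightarrow> bool" where
  "rational11 h R \<longleftrightarrow> (\<exists>D0 D1. minimal_ff h R D0 D1 \<and>
     compl_factorable h D0 \<and> compl_factorable h D1 \<and>
     degree D0 = 1 \<and> degree D1 = 1 \<and> coeff D0 0 = coeff D1 0 \<and> coeff D0 0 \<noteq> 0)"

definition h_generic :: "complex \<Rightarrow> nat \<Rightarrow> (nat \<Rightarrow> complex) \<Rightarrow> bool" where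
  "h_generic h p z \<longleftrightarrow> (\<forall>i\<in>{1..p}. \<forall>j\<in>{1..p}. i \<noteq> j \<longrightarrow> (\<forall>m::int. z i - z j \<noteq> of_int m * h))"

definition Tpoly :: "complex \<Rightarrow> nat \<Rightarrow> (nat \<Rightarrow> complex) \<Rightarrow> int \<Rightarrow> (nat \<Rightarrow> nat) \<Rightarrow> complex poly" where
  "Tpoly h p z sg c = (\<Prod>k\<in>{1..p}. \<Prod>j\<in>{1..c k}. [:- z k + of_int sg * of_nat j * h, 1:])"

definition typ_set :: "nat \<Rightarrow> (nat \<Rightarrow> nat) \<Rightarrow> (nat \<Rightarrow> nat) \<Rightarrow> nat set" where
  "typ_set p a b = {k\<in>{1..p}. a k + b k \<noteq> 0}"

definition phi_s :: "complex \<Rightarrow> nat \<Rightarrow> (nat \<Rightarrow> complex) \<Rightarrow> int \<Rightarrow> (nat \<Rightarrow> nat) \<Rightarrow> (nat \<Rightarrow> nat) \<Rightarrow> complex poly" where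
  "phi_s h p z s1 a b = (\<Prod>k\<in>typ_set p a b. [:- z k + of_int s1 * of_nat (a k) * h, 1:])"

definition psi_s :: "complex \<Rightarrow> nat \<Rightarrow> (nat \<Rightarrow> complex) \<Rightarrow> int \<Rightarrow> (nat \<Rightarrow> nat) \<Rightarrow> (nat \<Rightarrow> nat) \<Rightarrow> complex poly" where
  "psi_s h p z s2 a b = (\<Prod>k\<in>typ_set p a b. [:- z k + of_int s2 * of_nat (b k) * h, 1:])"

definition at_tilde :: "(nat \<Rightarrow> nat) \<Rightarrow> (nat \<Rightarrow> nat) \<Rightarrow> nat \<Rightarrow> nat" where
  "at_tilde a b k = (if a k + b k \<noteq> 0 then b k + 1 else 0)"

definition bt_tilde :: "(nat \<Rightarrow> nat) \<Rightarrow> (nat \<Rightarrow> nat) \<Rightarrow> nat \<Rightarrow> nat" where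
  "bt_tilde a b k = (if a k + b k \<noteq> 0 then a k - 1 else 0)"

definition BAE_sol :: "complex \<Rightarrow> nat \<Rightarrow> (nat \<Rightarrow> complex) \<Rightarrow> int \<Rightarrow> int \<Rightarrow> (nat \<Rightarrow> nat) \<Rightarrow> (nat \<Rightarrow> nat)
      \<Rightarrow> nat \<Rightarrow> (nat \<Rightarrow> complex) \<Rightarrow> bool" where
  "BAE_sol h p z s1 s2 a b l t \<longleftrightarrow>
     (\<forall>j\<in>{1..l}. (\<Prod>k\<in>typ_set p a b.
        (t j - z k + of_int s1 * of_nat (a k) * h) / (t j - z k + of_int s2 * of_nat (b k) * h)) = 1) \<and>
     (\<forall>j\<in>{1..l}. card {i\<in>{1..l}. t i = t j} \<le> order (t j) (phi_s h p z s1 a b - psi_s h p z s2 a b))"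

definition yrep :: "nat \<Rightarrow> (nat \<Rightarrow> complex) \<Rightarrow> complex poly" where
  "yrep l t = (\<Prod>j\<in>{1..l}. [:- t j, 1:])"

definition Rop :: "complex \<Rightarrow> int \<Rightarrow> int \<Rightarrow> complex poly \<Rightarrow> complex poly \<Rightarrow> complex poly \<Rightarrow> fexpr" where
  "Rop h s1 s2 T1 T2 y =
     (let A = to_fract (T1 * sp h s1 y) / to_fract (sp h s1 T1 * y);
          B = to_fract (T2 * sp h (- s2) y) / to_fract (sp h s2 T2 * y);
          F1 = [:1, - A:]; F2 = [:1, - B:]
      in if s1 = 1 then RF F1 F2 else LF F1 F2)"

end

theory Submission
  imports Defs
begin

text \<open>
  Both operators are quotients of first-order factors \<open>1 - A \<tau>\<close>. The telescoping identity
  \<open>T * \<rho> = \<Phi> * T[s]\<close> with \<open>\<rho> = \<Prod>(x - z\<^sub>k)\<close> over the typical \<open>k\<close> turns the coefficients of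
  \<open>R\<^sup>s(y)\<close> into \<open>A = \<phi> y[s\<^sub>1] / (\<rho> y)\<close>, \<open>B = \<psi> y[s\<^sub>1] / (\<rho> y)\<close>, and those of the dual
  operator into \<open>\<tilde>A = \<psi>[s\<^sub>1] \<tilde>y[s\<^sub>2] / (\<rho> \<tilde>y)\<close>, \<open>\<tilde>B = \<phi>[s\<^sub>1] \<tilde>y[s\<^sub>2] / (\<rho> \<tilde>y)\<close>.
  The relation \<open>y \<tilde>y[-s\<^sub>1] = \<phi> - \<psi>\<close> gives \<open>A - B = \<tilde>B - \<tilde>A\<close>, and the products of the
  coefficients agree trivially; together this is the operator identity
  \<open>(1 - \<tilde>B \<tau>)(1 - B \<tau>) = (1 - \<tilde>A \<tau>)(1 - A \<tau>)\<close> (or its mirror image), i.e. the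
  equality of the two fractions. Genericity of \<open>z\<close> and typicality give \<open>\<phi> \<noteq> \<psi>\<close>, hence
  \<open>A \<noteq> B\<close>; then \<open>(1 - A \<tau>)(1 - B \<tau>)\<^sup>-\<^sup>1\<close> and \<open>(1 - A \<tau>)\<^sup>-\<^sup>1(1 - B \<tau>)\<close> can be rewritten as
  \<open>(c + \<alpha> \<tau>)(c + \<tau>)\<^sup>-\<^sup>1\<close>, and comparing top and bottom coefficients shows that they are
  not difference operators, so this factorisation is minimal.
\<close>

section \<open>Shifts of polynomials and rational functions\<close>

lemma sp_0 [simp]: "sp h i 0 = 0"
  by (simp add: sp_def)

lemma sp_1 [simp]: "sp h i 1 = 1"
  by (simp add: sp_def pcompose_1)

lemma sp_mult: "sp h i (p * q) = sp h i p * sp h i q"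
  by (simp add: sp_def pcompose_mult)

lemma sp_diff: "sp h i (p - q) = sp h i p - sp h i q"
  by (simp add: sp_def pcompose_diff)

lemma sp_prod: "sp h i (prod f A) = (\<Prod>x\<in>A. sp h i (f x))"
  by (simp add: sp_def pcompose_prod)

lemma sp_eq_0_iff [simp]: "sp h i p = 0 \<longleftrightarrow> p = 0"
  unfolding sp_def by (rule pcompose_eq_0_iff) simp

lemma sp_monic_linear [simp]: "sp h i [:c, 1:] = [:c - of_int i * h, 1:]"
  by (simp add: sp_def pcompose_pCons)

lemma sp_sp: "sp h i (sp h j p) = sp h (i + j) p"
  unfolding sp_def pcompose_assoc[symmetric] by (simp add: pcompose_pCons algebra_simps)

lemma sp_0_left [simp]: "sp h 0 p = p"
  by (simp add: sp_def)

lemma shiftK_to_fract_divide: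
  "shiftK h i (to_fract a / to_fract b) = to_fract (sp h i a) / to_fract (sp h i b)"
proof (cases "b = 0")
  case True
  then show ?thesis by (simp add: shiftK_def)
next
  case False
  obtain a' b' where q: "quot_of_fract (to_fract a / to_fract b) = (a', b')"
    by (cases "quot_of_fract (to_fract a / to_fract b)")
  have "b' \<noteq> 0"
    using snd_quot_of_fract_nonzero[of "to_fract a / to_fract b"] q by simp
  moreover have "to_fract a' / to_fract b' = to_fract a / to_fract b"
    using Fract_quot_of_fract[of "to_fract a / to_fract b"] q by (simp add: Fract_conv_to_fract)
  ultimately have "a' * b = a * b'"
    using False by (simp add: field_simps flip: to_fract_mult)
  then have "sp h i a' * sp h i b = sp h i a * sp h i b'"
    by (simp flip: sp_mult)
  then show ?thesis
    using q False \<open>b' \<noteq> 0\<close> by (simp add: shiftK_def field_simps flip: to_fract_mult)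
qed

lemma shiftK_1 [simp]: "shiftK h i 1 = 1"
  using shiftK_to_fract_divide[of h i 1 1] by simp

lemma shiftK_0_left [simp]: "shiftK h 0 x = x"
  by (induction x) (simp add: Fract_conv_to_fract shiftK_to_fract_divide)

lemma shiftK_shiftK: "shiftK h i (shiftK h j x) = shiftK h (i + j) x"
  by (induction x) (simp add: Fract_conv_to_fract shiftK_to_fract_divide sp_sp)

lemma shiftK_eq_0_iff [simp]: "shiftK h i x = 0 \<longleftrightarrow> x = 0"
  by (induction x) (simp add: Fract_conv_to_fract shiftK_to_fract_divide)

lemma shiftK_0 [simp]: "shiftK h i 0 = 0"
  by simp

lemma shiftK_uminus: "shiftK h i (- x) = - shiftK h i x"
  by (induction x) (simp add: Fract_conv_to_fract shiftK_to_fract_divide sp_def pcompose_uminus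
      flip: divide_minus_left to_fract_uminus)

section \<open>First-order difference operators\<close>

lemma coeff_dmult:
  assumes "degree P \<le> N"
  shows "coeff (dmult h P Q) k =
    (\<Sum>i\<le>N. if i \<le> k then coeff P i * shiftK h (int i) (coeff Q (k - i)) else 0)"
proof -
  have inner: "(\<Sum>j\<le>degree Q. coeff (monom (coeff P i * shiftK h (int i) (coeff Q j)) (i + j)) k)
      = (if i \<le> k then coeff P i * shiftK h (int i) (coeff Q (k - i)) else 0)" for i
  proof (cases "i \<le> k \<and> k - i \<le> degree Q")
    case True
    then have "(\<Sum>j\<le>degree Q. coeff (monom (coeff P i * shiftK h (int i) (coeff Q j)) (i + j)) k)
        = (\<Sum>j\<le>degree Q. if j = k - i then coeff P i * shiftK h (int i) (coeff Q j) else 0)"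
      by (intro sum.cong) auto
    with True show ?thesis by simp
  next
    case False
    then show ?thesis by (auto simp: coeff_eq_0 intro!: sum.neutral)
  qed
  have "coeff (dmult h P Q) k =
      (\<Sum>i\<le>degree P. if i \<le> k then coeff P i * shiftK h (int i) (coeff Q (k - i)) else 0)"
    by (simp only: dmult_def coeff_sum inner)
  also have "\<dots> = (\<Sum>i\<le>N. if i \<le> k then coeff P i * shiftK h (int i) (coeff Q (k - i)) else 0)"
    using assms by (intro sum.mono_neutral_left) (auto simp: coeff_eq_0)
  finally show ?thesis .
qed

lemma coeff_dmult_first_order:
  "coeff (dmult h [:a, b:] Q) k =
    a * coeff Q k + (if k = 0 then 0 else b * shiftK h 1 (coeff Q (k - 1)))"
  by (simp add: coeff_dmult[of _ 1] degree_pCons_le numeral_eq_Suc)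

lemma dmult_first_order:
  "dmult h [:a, b:] [:c, d:] = [:a * c, a * d + b * shiftK h 1 c, b * shiftK h 1 d:]"
proof (rule poly_eqI)
  fix k
  show "coeff (dmult h [:a, b:] [:c, d:]) k = coeff [:a * c, a * d + b * shiftK h 1 c, b * shiftK h 1 d:] k"
    by (auto simp: coeff_dmult_first_order coeff_pCons split: nat.split)
qed

lemma dmult_first_order_const: "dmult h [:a, b:] [:c:] = [:a * c, b * shiftK h 1 c:]"
  using dmult_first_order[of h a b c 0] by simp

lemma dmult_const_left: "dmult h [:c:] Q = smult c Q"
  by (rule poly_eqI) (use coeff_dmult_first_order[of h c 0 Q] in simp)

lemma dmult_0_left [simp]: "dmult h 0 Q = 0"
  by (rule poly_eqI) (simp add: coeff_dmult[of _ 0])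

lemma dmult_0_right [simp]: "dmult h P 0 = 0"
  by (simp add: dmult_def)

lemma dmult_1_right [simp]: "dmult h P 1 = P"
proof (rule poly_eqI)
  fix k
  have "coeff (dmult h P 1) k = (\<Sum>i\<le>degree P. if i = k then coeff P i else 0)"
    unfolding coeff_dmult[OF order_refl] by (intro sum.cong) auto
  then show "coeff (dmult h P 1) k = coeff P k"
    by (simp add: coeff_eq_0)
qed

lemma coeff_dmult_above_degree:
  "degree P + degree Q < k \<Longrightarrow> coeff (dmult h P Q) k = 0"
  by (auto simp: coeff_dmult[OF order_refl] coeff_eq_0 intro!: sum.neutral)

lemma coeff_dmult_degree:
  "coeff (dmult h P Q) (degree P + degree Q) = lead_coeff P * shiftK h (int (degree P)) (lead_coeff Q)"
proof -
  have "coeff (dmult h P Q) (degree P + degree Q) =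
      (\<Sum>i\<le>degree P. if i = degree P then lead_coeff P * shiftK h (int (degree P)) (lead_coeff Q) else 0)"
    unfolding coeff_dmult[OF order_refl] by (intro sum.cong) (auto simp: coeff_eq_0)
  then show ?thesis by simp
qed

lemma degree_dmult:
  assumes "P \<noteq> 0" "Q \<noteq> 0"
  shows "degree (dmult h P Q) = degree P + degree Q"
  using assms coeff_dmult_degree[of h P Q] coeff_dmult_above_degree[of P Q _ h]
  by (intro antisym degree_le le_degree) auto

lemma dmult_eq_0_iff [simp]: "dmult h P Q = 0 \<longleftrightarrow> P = 0 \<or> Q = 0"
  using coeff_dmult_degree[of h P Q] by auto

lemma compl_factorable_first_order:
  assumes "\<alpha> \<noteq> 0"
  shows "compl_factorable h [:c, \<alpha>:]"
  unfolding compl_factorable_def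
proof (intro exI)
  show "[:c, \<alpha>:] = dmult h [:\<alpha>:] (dprod h [- (c / \<alpha>)])"
    using assms by (simp add: dmult_const_left)
qed

lemma rational11I:
  assumes R: "feq h R (RF [:c, \<alpha>:] [:c, 1:])" and "c \<noteq> 0" "\<alpha> \<noteq> 0"
    and not_polynomial: "\<And>D0 d. d \<noteq> 0 \<Longrightarrow> \<not> feq h R (RF D0 [:d:])"
  shows "rational11 h R"
proof -
  have "minimal_ff h R [:c, \<alpha>:] [:c, 1:]"
    unfolding minimal_ff_def
  proof (intro conjI allI impI)
    fix D0 D1
    assume "D1 \<noteq> 0" and "feq h R (RF D0 D1)"
    then have "degree D1 \<noteq> 0"
      using not_polynomial[of "coeff D1 0" D0] by (metis degree_0_id pCons_0_0)
    then show "degree [:c, 1:] \<le> degree D1"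
      by simp
  qed (use R in simp_all)
  with assms show ?thesis
    unfolding rational11_def
    by (intro exI[of _ "[:c, \<alpha>:]"] exI[of _ "[:c, 1:]"]) (simp add: compl_factorable_first_order)
qed

lemma RF_first_order_not_polynomial:
  assumes "A \<noteq> 0" "B \<noteq> 0" "A \<noteq> B" "d \<noteq> 0"
  shows "\<not> feq h (RF [:1, -A:] [:1, -B:]) (RF D0 [:d:])"
proof
  assume "feq h (RF [:1, -A:] [:1, -B:]) (RF D0 [:d:])"
  then obtain U U' where "U \<noteq> 0" "U' \<noteq> 0"
    and denom: "dmult h [:1, -B:] U = smult d U'" and numer: "dmult h [:1, -A:] U = dmult h D0 U'"
    by (auto simp: dmult_const_left)
  have "degree U' = Suc (degree U)"
    using degree_dmult[of "[:1, -B:]" U h] denom assms \<open>U \<noteq> 0\<close> by simp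
  moreover have "D0 \<noteq> 0"
    using numer \<open>U \<noteq> 0\<close> by auto
  ultimately have "degree D0 = 0"
    using degree_dmult[of "[:1, -A:]" U h] degree_dmult[of D0 U' h] numer assms \<open>U \<noteq> 0\<close> \<open>U' \<noteq> 0\<close>
    by simp
  then obtain e where "D0 = [:e:]"
    by (metis degree_0_id)
  with numer have numer': "dmult h [:1, -A:] U = smult e U'"
    by (simp add: dmult_const_left)
  have "dmult h [:d - e, e * B - d * A:] U = smult d (dmult h [:1, -A:] U) - smult e (dmult h [:1, -B:] U)"
    by (rule poly_eqI) (simp add: coeff_dmult_first_order algebra_simps)
  also have "\<dots> = 0"
    by (simp add: denom numer' mult.commute)
  finally have "d = e" "e * B = d * A"
    using \<open>U \<noteq> 0\<close> by simp_all
  with assms show False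
    by simp
qed

lemma LF_first_order_not_polynomial:
  assumes "A \<noteq> 0" "B \<noteq> 0" "A \<noteq> B" "d \<noteq> 0"
  shows "\<not> feq h (LF [:1, -A:] [:1, -B:]) (RF D0 [:d:])"
proof
  assume "feq h (LF [:1, -A:] [:1, -B:]) (RF D0 [:d:])"
  then have eq: "[:d, - B * shiftK h 1 d:] = dmult h [:1, -A:] D0"
    by (simp add: dmult_first_order_const)
  then have "D0 \<noteq> 0"
    using assms by auto
  then have "degree D0 = 0"
    using degree_dmult[of "[:1, -A:]" D0 h] eq[symmetric] assms by simp
  then obtain f where "D0 = [:f:]"
    by (metis degree_0_id)
  with eq have "d = f" and "B * shiftK h 1 d = A * shiftK h 1 f"
    by (auto simp: dmult_first_order_const)
  with assms show False
    by simp
qed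

lemma rational11_RF_first_order:
  assumes "A \<noteq> 0" "B \<noteq> 0" "A \<noteq> B"
  shows "rational11 h (RF [:1, -A:] [:1, -B:])"
proof (rule rational11I)
  define c where "c = shiftK h (-1) (- 1 / B)"
  have c: "shiftK h 1 c = - 1 / B"
    by (simp add: c_def shiftK_shiftK)
  show "c \<noteq> 0" "A / B \<noteq> 0"
    using assms by (simp_all add: c_def)
  show "feq h (RF [:1, -A:] [:1, -B:]) (RF [:c, A / B:] [:c, 1:])"
    unfolding feq.simps
  proof (intro exI conjI)
    show "dmult h [:1, -B:] [:c:] = dmult h [:c, 1:] 1" "dmult h [:1, -A:] [:c:] = dmult h [:c, A / B:] 1"
      using assms by (simp_all add: dmult_first_order_const c)
  qed (use \<open>c \<noteq> 0\<close> in simp_all)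
qed (use assms RF_first_order_not_polynomial in blast)

lemma rational11_LF_first_order:
  assumes "A \<noteq> 0" "B \<noteq> 0" "A \<noteq> B"
  shows "rational11 h (LF [:1, -A:] [:1, -B:])"
proof (rule rational11I)
  \<comment> \<open>\<open>\<alpha>\<close> and \<open>c\<close> solve \<open>(1 - B \<tau>)(c + \<tau>) = (1 - A \<tau>)(c + \<alpha> \<tau>)\<close>.\<close>
  define \<alpha> where "\<alpha> = shiftK h (-1) (B / A)"
  define c where "c = shiftK h (-1) ((1 - \<alpha>) / (B - A))"
  have \<alpha>: "shiftK h 1 \<alpha> = B / A" and c: "shiftK h 1 c = (1 - \<alpha>) / (B - A)"
    by (simp_all add: \<alpha>_def c_def shiftK_shiftK)
  have "\<alpha> \<noteq> 1"
    using \<alpha> assms by auto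
  then show "c \<noteq> 0" "\<alpha> \<noteq> 0"
    using assms by (simp_all add: c_def \<alpha>_def)
  show "feq h (LF [:1, -A:] [:1, -B:]) (RF [:c, \<alpha>:] [:c, 1:])"
    using assms by (simp add: dmult_first_order \<alpha> c field_simps)
qed (use assms LF_first_order_not_polynomial in blast)

lemma feq_RF_LF_first_order_iff:
  "feq h (RF [:1, -A:] [:1, -B:]) (LF [:1, -At:] [:1, -Bt:]) \<longleftrightarrow>
    A + At = B + Bt \<and> At * shiftK h 1 A = Bt * shiftK h 1 B"
  by (auto simp: dmult_first_order shiftK_uminus algebra_simps)

lemma feq_LF_RF_first_order_iff:
  "feq h (LF [:1, -A:] [:1, -B:]) (RF [:1, -At:] [:1, -Bt:]) \<longleftrightarrow>
    A + At = B + Bt \<and> A * shiftK h 1 At = B * shiftK h 1 Bt"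
  by (auto simp: dmult_first_order shiftK_uminus algebra_simps)

section \<open>The operators \<open>R\<^sup>s(y)\<close>\<close>

definition Rop_reduced ::
    "complex \<Rightarrow> int \<Rightarrow> int \<Rightarrow> complex poly \<Rightarrow> complex poly \<Rightarrow> complex poly \<Rightarrow> complex poly \<Rightarrow> fexpr" where
  "Rop_reduced h s1 s2 \<Phi>1 \<Phi>2 \<rho> y =
     (let A = to_fract (\<Phi>1 * sp h s1 y) / to_fract (\<rho> * y);
          B = to_fract (\<Phi>2 * sp h (- s2) y) / to_fract (\<rho> * y)
      in if s1 = 1 then RF [:1, -A:] [:1, -B:] else LF [:1, -A:] [:1, -B:])"

lemma to_fract_ratio_telescope:
  assumes "T * \<rho> = \<Phi> * sp h \<sigma> T" "T \<noteq> 0" "\<rho> \<noteq> 0"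
  shows "to_fract (T * w) / to_fract (sp h \<sigma> T * y) = to_fract (\<Phi> * w) / to_fract (\<rho> * y)"
proof (cases "y = 0")
  case False
  have "to_fract T * to_fract \<rho> = to_fract \<Phi> * to_fract (sp h \<sigma> T)"
    using assms(1) by (simp flip: to_fract_mult)
  with assms False show ?thesis
    by (simp add: field_simps)
qed simp

lemma Rop_eq_Rop_reduced:
  assumes "T1 * \<rho> = \<Phi>1 * sp h s1 T1" "T2 * \<rho> = \<Phi>2 * sp h s2 T2" "T1 \<noteq> 0" "T2 \<noteq> 0" "\<rho> \<noteq> 0"
  shows "Rop h s1 s2 T1 T2 y = Rop_reduced h s1 s2 \<Phi>1 \<Phi>2 \<rho> y"
  unfolding Rop_def Rop_reduced_def
  by (simp only: Let_def to_fract_ratio_telescope[OF assms(1,3,5)] to_fract_ratio_telescope[OF assms(2,4,5)])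

lemma Rop_reduced_duality:
  assumes s: "(s1 = 1 \<and> s2 = -1) \<or> (s1 = -1 \<and> s2 = 1)"
    and "\<rho> \<noteq> 0" "\<phi> \<noteq> 0" "\<psi> \<noteq> 0" "\<phi> \<noteq> \<psi>"
    and y: "y * sp h (- s1) yt = \<phi> - \<psi>"
  shows "rational11 h (Rop_reduced h s1 s2 \<phi> \<psi> \<rho> y) \<and>
    feq h (Rop_reduced h s1 s2 \<phi> \<psi> \<rho> y) (Rop_reduced h s2 s1 (sp h s1 \<psi>) (sp h s1 \<phi>) \<rho> yt)"
proof -
  have s2: "s2 = - s1"
    using s by auto
  have "y \<noteq> 0" "yt \<noteq> 0"
    using y \<open>\<phi> \<noteq> \<psi>\<close> by auto
  define A where "A = to_fract (\<phi> * sp h s1 y) / to_fract (\<rho> * y)"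
  define B where "B = to_fract (\<psi> * sp h s1 y) / to_fract (\<rho> * y)"
  define At where "At = to_fract (sp h s1 \<psi> * sp h s2 yt) / to_fract (\<rho> * yt)"
  define Bt where "Bt = to_fract (sp h s1 \<phi> * sp h s2 yt) / to_fract (\<rho> * yt)"
  have R: "Rop_reduced h s1 s2 \<phi> \<psi> \<rho> y =
      (if s1 = 1 then RF [:1, -A:] [:1, -B:] else LF [:1, -A:] [:1, -B:])"
    and Rt: "Rop_reduced h s2 s1 (sp h s1 \<psi>) (sp h s1 \<phi>) \<rho> yt =
      (if s1 = 1 then LF [:1, -At:] [:1, -Bt:] else RF [:1, -At:] [:1, -Bt:])"
    using s by (auto simp: Rop_reduced_def A_def B_def At_def Bt_def)
  have "A \<noteq> 0" "B \<noteq> 0" "A \<noteq> B"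
    using assms \<open>y \<noteq> 0\<close> by (simp_all add: A_def B_def)
  have "to_fract \<phi> - to_fract \<psi> = to_fract y * to_fract (sp h s2 yt)"
    using y s2 by (simp flip: to_fract_mult to_fract_diff)
  moreover have "to_fract (sp h s1 \<phi>) - to_fract (sp h s1 \<psi>) = to_fract (sp h s1 y) * to_fract yt"
    using arg_cong[OF y, of "sp h s1"] by (simp add: sp_mult sp_diff sp_sp flip: to_fract_mult to_fract_diff)
  ultimately have sum: "A + At = B + Bt"
    using assms \<open>y \<noteq> 0\<close> \<open>yt \<noteq> 0\<close> unfolding A_def B_def At_def Bt_def
    by (simp add: field_simps)
  show ?thesis
  proof (cases "s1 = 1")
    case True
    then have "At * shiftK h 1 A = Bt * shiftK h 1 B"
      using s2 unfolding A_def B_def At_def Bt_def shiftK_to_fract_divide by (simp add: sp_mult mult_ac)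
    with sum have "feq h (RF [:1, -A:] [:1, -B:]) (LF [:1, -At:] [:1, -Bt:])"
      using feq_RF_LF_first_order_iff by blast
    moreover have "rational11 h (RF [:1, -A:] [:1, -B:])"
      by (rule rational11_RF_first_order) fact+
    ultimately show ?thesis
      using True R Rt by simp
  next
    case False
    then have "s1 = -1" "s2 = 1"
      using s by auto
    then have "A * shiftK h 1 At = B * shiftK h 1 Bt"
      unfolding A_def B_def At_def Bt_def shiftK_to_fract_divide by (simp add: sp_mult sp_sp mult_ac)
    with sum have "feq h (LF [:1, -A:] [:1, -B:]) (RF [:1, -At:] [:1, -Bt:])"
      using feq_LF_RF_first_order_iff by blast
    moreover have "rational11 h (LF [:1, -A:] [:1, -B:])"
      by (rule rational11_LF_first_order) fact+
    ultimately show ?thesis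
      using False R Rt by simp
  qed
qed

lemma prod_telescope_shift:
  fixes f :: "nat \<Rightarrow> 'a::comm_monoid_mult"
  shows "(\<Prod>j\<in>{1..c}. f j) * f 0 = f c * (\<Prod>j\<in>{1..c}. f (j - 1))"
proof (induction c)
  case (Suc c)
  have "(\<Prod>j\<in>{1..Suc c}. f j) * f 0 = f (Suc c) * ((\<Prod>j\<in>{1..c}. f j) * f 0)"
    by (simp add: mult_ac)
  also have "\<dots> = f (Suc c) * (f c * (\<Prod>j\<in>{1..c}. f (j - 1)))"
    by (simp only: Suc.IH)
  also have "\<dots> = f (Suc c) * (\<Prod>j\<in>{1..Suc c}. f (j - 1))"
    by (simp add: mult_ac)
  finally show ?case .
qed simp

lemma Tpoly_factor_telescope:
  "(\<Prod>j\<in>{1..c}. [:- w + of_int \<sigma> * of_nat j * h, 1:]) * [:- w, 1:] =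
    [:- w + of_int \<sigma> * of_nat c * h, 1:] * (\<Prod>j\<in>{1..c}. sp h \<sigma> [:- w + of_int \<sigma> * of_nat j * h, 1:])"
proof -
  have "(\<Prod>j\<in>{1..c}. sp h \<sigma> [:- w + of_int \<sigma> * of_nat j * h, 1:]) =
      (\<Prod>j\<in>{1..c}. [:- w + of_int \<sigma> * of_nat (j - 1) * h, 1:])"
    by (intro prod.cong) (auto simp: algebra_simps)
  then show ?thesis
    using prod_telescope_shift[of "\<lambda>j. [:- w + of_int \<sigma> * of_nat j * h, 1:]" c] by simp
qed

lemma Tpoly_telescope:
  assumes "S \<subseteq> {1..p}" "\<And>k. k \<in> {1..p} - S \<Longrightarrow> c k = 0"
  shows "Tpoly h p z \<sigma> c * (\<Prod>k\<in>S. [:- z k, 1:]) =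
    (\<Prod>k\<in>S. [:- z k + of_int \<sigma> * of_nat (c k) * h, 1:]) * sp h \<sigma> (Tpoly h p z \<sigma> c)"
proof -
  have "Tpoly h p z \<sigma> c = (\<Prod>k\<in>S. \<Prod>j\<in>{1..c k}. [:- z k + of_int \<sigma> * of_nat j * h, 1:])"
    unfolding Tpoly_def using assms by (intro prod.mono_neutral_right) auto
  then show ?thesis
    by (simp only: sp_prod prod.distrib[symmetric]) (intro prod.cong refl Tpoly_factor_telescope)
qed

lemma Tpoly_ne_0 [simp]: "Tpoly h p z \<sigma> c \<noteq> 0"
  by (simp add: Tpoly_def)

lemma typ_set_subset: "typ_set p a b \<subseteq> {1..p}"
  by (auto simp: typ_set_def)

lemma finite_typ_set [simp]: "finite (typ_set p a b)"
  using finite_subset[OF typ_set_subset] by blast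

lemma phi_s_ne_0 [simp]: "phi_s h p z s a b \<noteq> 0"
  by (simp add: phi_s_def)

lemma psi_s_ne_0 [simp]: "psi_s h p z s a b \<noteq> 0"
  by (simp add: psi_s_def)

lemma sp_psi_s:
  assumes "s2 = - s1"
  shows "sp h s1 (psi_s h p z s2 a b) =
    (\<Prod>k\<in>typ_set p a b. [:- z k + of_int s2 * of_nat (at_tilde a b k) * h, 1:])"
  unfolding psi_s_def sp_prod using assms
  by (intro prod.cong) (auto simp: typ_set_def at_tilde_def algebra_simps)

lemma sp_phi_s:
  assumes "\<And>k. k \<in> {1..p} \<Longrightarrow> a k = 0 \<Longrightarrow> b k = 0"
  shows "sp h s (phi_s h p z s a b) =
    (\<Prod>k\<in>typ_set p a b. [:- z k + of_int s * of_nat (bt_tilde a b k) * h, 1:])"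
  unfolding phi_s_def sp_prod
proof (intro prod.cong refl)
  fix k
  assume "k \<in> typ_set p a b"
  then have "k \<in> {1..p}" "a k + b k \<noteq> 0"
    by (auto simp: typ_set_def)
  with assms have "1 \<le> a k"
    by (cases "a k") auto
  then show "sp h s [:- z k + of_int s * of_nat (a k) * h, 1:] =
      [:- z k + of_int s * of_nat (bt_tilde a b k) * h, 1:]"
    by (simp add: bt_tilde_def algebra_simps)
qed

lemma phi_s_ne_psi_s:
  assumes "h \<noteq> 0" "s1 \<noteq> 0" "s2 = - s1" and generic: "h_generic h p z"
    and k0: "k0 \<in> {1..p}" "a k0 + b k0 \<noteq> 0"
  shows "phi_s h p z s1 a b \<noteq> psi_s h p z s2 a b"
proof
  assume eq: "phi_s h p z s1 a b = psi_s h p z s2 a b"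
  define x0 where "x0 = z k0 - of_int s1 * of_nat (a k0) * h"
  have "k0 \<in> typ_set p a b"
    using k0 by (simp add: typ_set_def)
  then have "poly (phi_s h p z s1 a b) x0 = 0"
    by (auto simp: phi_s_def poly_prod x0_def intro!: bexI[of _ k0])
  moreover have "poly (psi_s h p z s2 a b) x0 \<noteq> 0"
  proof
    assume "poly (psi_s h p z s2 a b) x0 = 0"
    then obtain k where k: "k \<in> typ_set p a b" and "poly [:- z k + of_int s2 * of_nat (b k) * h, 1:] x0 = 0"
      unfolding psi_s_def poly_prod by (subst (asm) prod_zero_iff) auto
    then have diff: "z k0 - z k = of_int (s1 * int (a k0) - s2 * int (b k)) * h"
      by (simp add: x0_def algebra_simps)
    show False
    proof (cases "k = k0")
      case True
      with diff \<open>s2 = - s1\<close> have "of_int (s1 * (int (a k0) + int (b k0))) * h = 0"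
        by (simp add: algebra_simps)
      with assms show False
        by (simp del: of_int_mult)
    next
      case False
      from k have "k \<in> {1..p}"
        using typ_set_subset by blast
      with generic k0(1) False diff show False
        unfolding h_generic_def by metis
    qed
  qed
  ultimately show False
    using eq by simp
qed

theorem lemma4p5:
  fixes h :: complex and p l :: nat and z t :: "nat \<Rightarrow> complex" and a b :: "nat \<Rightarrow> nat"
    and s1 s2 :: int and yt :: "complex poly"
  assumes "h \<noteq> 0"
    and "(s1 = 1 \<and> s2 = -1) \<or> (s1 = -1 \<and> s2 = 1)"
    and "\<And>k. k \<in> {1..p} \<Longrightarrow> a k = 0 \<Longrightarrow> b k = 0"
    and "h_generic h p z"
    and "BAE_sol h p z s1 s2 a b l t"
    and "yrep l t * sp h (- s1) yt = phi_s h p z s1 a b - psi_s h p z s2 a b"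
    and "\<exists>k\<in>{1..p}. a k + b k \<noteq> 0"
  shows "rational11 h (Rop h s1 s2 (Tpoly h p z s1 a) (Tpoly h p z s2 b) (yrep l t)) \<and>
         feq h (Rop h s1 s2 (Tpoly h p z s1 a) (Tpoly h p z s2 b) (yrep l t))
               (Rop h s2 s1 (Tpoly h p z s2 (at_tilde a b)) (Tpoly h p z s1 (bt_tilde a b)) yt)"
proof -
  have s2: "s2 = - s1" and "s1 \<noteq> 0"
    using assms(2) by auto
  define S where "S = typ_set p a b"
  define \<rho> where "\<rho> = (\<Prod>k\<in>S. [:- z k, 1:])"
  have "S \<subseteq> {1..p}"
    unfolding S_def by (rule typ_set_subset)
  have "finite S" "\<rho> \<noteq> 0"
    by (simp_all add: S_def \<rho>_def)
  have outside: "a k = 0" "b k = 0" "at_tilde a b k = 0" "bt_tilde a b k = 0" if "k \<in> {1..p} - S" for k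
    using that by (auto simp: S_def typ_set_def at_tilde_def bt_tilde_def)
  have sp_psi: "sp h s1 (psi_s h p z s2 a b) = (\<Prod>k\<in>S. [:- z k + of_int s2 * of_nat (at_tilde a b k) * h, 1:])"
    unfolding S_def by (rule sp_psi_s[OF s2])
  have sp_phi: "sp h s1 (phi_s h p z s1 a b) = (\<Prod>k\<in>S. [:- z k + of_int s1 * of_nat (bt_tilde a b k) * h, 1:])"
    unfolding S_def by (rule sp_phi_s[OF assms(3)])
  have "Rop h s1 s2 (Tpoly h p z s1 a) (Tpoly h p z s2 b) (yrep l t) =
      Rop_reduced h s1 s2 (phi_s h p z s1 a b) (psi_s h p z s2 a b) \<rho> (yrep l t)"
    unfolding phi_s_def psi_s_def S_def[symmetric] \<rho>_def
    using \<open>S \<subseteq> {1..p}\<close> \<open>finite S\<close> outside by (intro Rop_eq_Rop_reduced Tpoly_telescope) auto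
  moreover have "Rop h s2 s1 (Tpoly h p z s2 (at_tilde a b)) (Tpoly h p z s1 (bt_tilde a b)) yt =
      Rop_reduced h s2 s1 (sp h s1 (psi_s h p z s2 a b)) (sp h s1 (phi_s h p z s1 a b)) \<rho> yt"
    unfolding sp_psi sp_phi \<rho>_def
    using \<open>S \<subseteq> {1..p}\<close> \<open>finite S\<close> outside by (intro Rop_eq_Rop_reduced Tpoly_telescope) auto
  moreover have "phi_s h p z s1 a b \<noteq> psi_s h p z s2 a b"
    using assms(1,4,7) s2 \<open>s1 \<noteq> 0\<close> phi_s_ne_psi_s by blast
  ultimately show ?thesis
    using Rop_reduced_duality[OF assms(2) \<open>\<rho> \<noteq> 0\<close> _ _ _ assms(6)] by simp
qed

end
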